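(* Let $(V,F)$ be a near vector space with $(F,\circ)$ commutative, and let $u,v\in Q(V)\setminus\{0\}$. Suppose that for all $n\geq1$ and all $\alpha_1,\dots,\alpha_n\in F$, $$\alpha_1+_u\cdots+_u\alpha_n=0 \iff \alpha_1+_v\cdots+_v\alpha_n=0.$$ Then $+_u=+_v$. (Thus the addition $+_u$ is completely determined by which finite $+_u$-sums of elements of $F$ are zero.)
   Context: An F-group is a pair $(V,F)$ where $(V,+)$ is a group and $F$ is a set of endomorphisms of $V$ such that: the maps $0,1,-1$ lie in $F$; $F\setminus\{0\}$ is a subgroup of $\mathrm{Aut}(V,+)$ under composition; and if $\alpha x=\beta x$ with $\alpha,\beta\in F$, $x\in V$ then $\alpha=\beta$ or $x=0$. The quasi-kernel $Q(V)$ is the set of $u\in V$ such that for all $\alpha,\beta\in F$ there is $\gamma\in F$ with $\alpha u+\beta u=\gamma u$. $(V,F)$ is a near vector space if $Q(V)$ generates $(V,+)$. Commutativity means $\alpha(\beta v)=\beta(\alpha v)$ for all $\alpha,\beta\in F$, $v\in V$. For $u\in Q(V)\setminus\{0\}$, $\alpha+_u\beta$ is the unique $\gamma\in F$ with $\alpha u+\beta u=\gamma u$; $(F,+_u,\circ)$ is a field. *)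

theory Defs
  imports Main
begin

text \<open>The additive group (V,+) is modelled by a type of class group_add (not necessarily
abelian); F is a set of maps V \<Rightarrow> V.\<close>

definition zero_map :: "'a::group_add \<Rightarrow> 'a" where
  "zero_map = (\<lambda>x. 0)"

definition endo :: "('a::group_add \<Rightarrow> 'a) \<Rightarrow> bool" where
  "endo f \<longleftrightarrow> (\<forall>x y. f (x + y) = f x + f y)"

definition aut_subgroup :: "('a::group_add \<Rightarrow> 'a) set \<Rightarrow> bool" where
  "aut_subgroup G \<longleftrightarrow> id \<in> G \<and> (\<forall>f\<in>G. endo f \<and> bij f \<and> inv f \<in> G)
     \<and> (\<forall>f\<in>G. \<forall>g\<in>G. f \<circ> g \<in> G)"

definition F_group :: "('a::group_add \<Rightarrow> 'a) set \<Rightarrow> bool" where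
  "F_group F \<longleftrightarrow> (\<forall>f\<in>F. endo f) \<and> zero_map \<in> F \<and> id \<in> F \<and> uminus \<in> F
     \<and> aut_subgroup (F - {zero_map})
     \<and> (\<forall>\<alpha>\<in>F. \<forall>\<beta>\<in>F. \<forall>x. \<alpha> x = \<beta> x \<longrightarrow> \<alpha> = \<beta> \<or> x = 0)"

definition quasi_kernel :: "('a::group_add \<Rightarrow> 'a) set \<Rightarrow> 'a set" where
  "quasi_kernel F = {u. \<forall>\<alpha>\<in>F. \<forall>\<beta>\<in>F. \<exists>\<gamma>\<in>F. \<alpha> u + \<beta> u = \<gamma> u}"

definition add_subgroup :: "'a::group_add set \<Rightarrow> bool" where
  "add_subgroup H \<longleftrightarrow> 0 \<in> H \<and> (\<forall>x\<in>H. \<forall>y\<in>H. x + y \<in> H) \<and> (\<forall>x\<in>H. - x \<in> H)"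

definition generated_subgroup :: "'a::group_add set \<Rightarrow> 'a set" where
  "generated_subgroup S = \<Inter>{H. add_subgroup H \<and> S \<subseteq> H}"

definition near_vector_space :: "('a::group_add \<Rightarrow> 'a) set \<Rightarrow> bool" where
  "near_vector_space F \<longleftrightarrow> F_group F \<and> generated_subgroup (quasi_kernel F) = UNIV"

definition F_commutative :: "('a \<Rightarrow> 'a) set \<Rightarrow> bool" where
  "F_commutative F \<longleftrightarrow> (\<forall>\<alpha>\<in>F. \<forall>\<beta>\<in>F. \<forall>v. \<alpha> (\<beta> v) = \<beta> (\<alpha> v))"

definition plus_at :: "('a::group_add \<Rightarrow> 'a) set \<Rightarrow> 'a \<Rightarrow> ('a \<Rightarrow> 'a) \<Rightarrow> ('a \<Rightarrow> 'a) \<Rightarrow> ('a \<Rightarrow> 'a)" where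
  "plus_at F u \<alpha> \<beta> = (THE \<gamma>. \<gamma> \<in> F \<and> \<alpha> u + \<beta> u = \<gamma> u)"

fun sum_at :: "('a::group_add \<Rightarrow> 'a) set \<Rightarrow> 'a \<Rightarrow> ('a \<Rightarrow> 'a) list \<Rightarrow> ('a \<Rightarrow> 'a)" where
  "sum_at F u [] = zero_map"
| "sum_at F u (\<alpha> # \<alpha>s) = foldl (plus_at F u) \<alpha> \<alpha>s"

end

theory Submission
  imports Defs
begin

text \<open>A sum \<open>\<alpha> +\<^sub>w \<beta>\<close> equals \<open>\<gamma>\<close> exactly when the three-term sum \<open>\<alpha> +\<^sub>w \<beta> +\<^sub>w (-\<gamma>)\<close>
  vanishes, and the latter condition is the same for \<open>u\<close> and \<open>v\<close> by hypothesis.\<close>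

lemma F_group_separates:
  assumes "F_group F" and "\<alpha> \<in> F" and "\<beta> \<in> F" and "\<alpha> x = \<beta> x" and "x \<noteq> 0"
  shows "\<alpha> = \<beta>"
  using assms unfolding F_group_def by blast

lemma F_group_neg_comp:
  assumes FG: "F_group F" and g: "\<gamma> \<in> F"
  shows "uminus \<circ> \<gamma> \<in> F"
proof -
  have zero: "zero_map \<in> F" and neg: "uminus \<in> F" and sub: "aut_subgroup (F - {zero_map})"
    using FG unfolding F_group_def by auto
  show ?thesis
  proof (cases "\<gamma> = zero_map \<or> uminus = (zero_map :: 'a \<Rightarrow> 'a)")
    case True
    then have "uminus \<circ> \<gamma> = zero_map"
      by (auto simp: zero_map_def fun_eq_iff dest: fun_cong)
    then show ?thesis using zero by simp
  next
    case False
    then show ?thesis using sub g neg unfolding aut_subgroup_def by blast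
  qed
qed

lemma plus_at_mem_apply:
  assumes FG: "F_group F" and w: "w \<in> quasi_kernel F" "w \<noteq> 0"
    and a: "\<alpha> \<in> F" and b: "\<beta> \<in> F"
  shows "plus_at F w \<alpha> \<beta> \<in> F" and "\<alpha> w + \<beta> w = plus_at F w \<alpha> \<beta> w"
proof -
  obtain \<gamma> where "\<gamma> \<in> F" "\<alpha> w + \<beta> w = \<gamma> w"
    using w a b unfolding quasi_kernel_def by blast
  with F_group_separates[OF FG] w have "\<exists>!\<gamma>. \<gamma> \<in> F \<and> \<alpha> w + \<beta> w = \<gamma> w" by metis
  from theI'[OF this] show "plus_at F w \<alpha> \<beta> \<in> F" "\<alpha> w + \<beta> w = plus_at F w \<alpha> \<beta> w"
    unfolding plus_at_def by auto
qed

lemma plus_at_eq_iff: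
  assumes FG: "F_group F" and w: "w \<in> quasi_kernel F" "w \<noteq> 0"
    and a: "\<alpha> \<in> F" and b: "\<beta> \<in> F" and g: "\<gamma> \<in> F"
  shows "plus_at F w \<alpha> \<beta> = \<gamma> \<longleftrightarrow> \<alpha> w + \<beta> w = \<gamma> w"
  using plus_at_mem_apply[OF FG w a b] F_group_separates[OF FG _ g _ w(2)] by metis

lemma plus_at_eq_iff_sum_at_neg_zero:
  assumes FG: "F_group F" and w: "w \<in> quasi_kernel F" "w \<noteq> 0"
    and a: "\<alpha> \<in> F" and b: "\<beta> \<in> F" and g: "\<gamma> \<in> F"
  shows "plus_at F w \<alpha> \<beta> = \<gamma> \<longleftrightarrow> sum_at F w [\<alpha>, \<beta>, uminus \<circ> \<gamma>] = zero_map"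
proof -
  define \<delta> where "\<delta> = plus_at F w \<alpha> \<beta>"
  have d: "\<delta> \<in> F" using plus_at_mem_apply(1)[OF FG w a b] by (simp add: \<delta>_def)
  have zero: "zero_map \<in> F" using FG unfolding F_group_def by blast
  have "sum_at F w [\<alpha>, \<beta>, uminus \<circ> \<gamma>] = zero_map \<longleftrightarrow> plus_at F w \<delta> (uminus \<circ> \<gamma>) = zero_map"
    by (simp add: \<delta>_def)
  also have "\<dots> \<longleftrightarrow> \<delta> w + - \<gamma> w = 0"
    using plus_at_eq_iff[OF FG w d F_group_neg_comp[OF FG g] zero] by (simp add: zero_map_def)
  also have "\<dots> \<longleftrightarrow> \<delta> w = \<gamma> w"
    by (simp add: add_eq_0_iff2 eq_neg_iff_add_eq_0)
  also have "\<dots> \<longleftrightarrow> \<delta> = \<gamma>"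
    using F_group_separates[OF FG d g _ w(2)] by blast
  finally show ?thesis by (simp add: \<delta>_def)
qed

theorem mainTheorem7:
  fixes F :: "('a::group_add \<Rightarrow> 'a) set" and u v :: 'a
  assumes "near_vector_space F"
    and "F_commutative F"
    and "u \<in> quasi_kernel F" and "u \<noteq> 0"
    and "v \<in> quasi_kernel F" and "v \<noteq> 0"
    and "\<forall>\<alpha>s. \<alpha>s \<noteq> [] \<and> set \<alpha>s \<subseteq> F \<longrightarrow>
           (sum_at F u \<alpha>s = zero_map \<longleftrightarrow> sum_at F v \<alpha>s = zero_map)"
  shows "\<forall>\<alpha>\<in>F. \<forall>\<beta>\<in>F. plus_at F u \<alpha> \<beta> = plus_at F v \<alpha> \<beta>"
proof (intro ballI)
  fix \<alpha> \<beta> assume a: "\<alpha> \<in> F" and b: "\<beta> \<in> F"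
  have FG: "F_group F" using assms(1) unfolding near_vector_space_def by blast
  define \<gamma> where "\<gamma> = plus_at F u \<alpha> \<beta>"
  have g: "\<gamma> \<in> F" using plus_at_mem_apply(1)[OF FG assms(3,4) a b] by (simp add: \<gamma>_def)
  have "sum_at F u [\<alpha>, \<beta>, uminus \<circ> \<gamma>] = zero_map"
    using plus_at_eq_iff_sum_at_neg_zero[OF FG assms(3,4) a b g] by (simp add: \<gamma>_def)
  moreover have "set [\<alpha>, \<beta>, uminus \<circ> \<gamma>] \<subseteq> F" using a b F_group_neg_comp[OF FG g] by simp
  ultimately have "sum_at F v [\<alpha>, \<beta>, uminus \<circ> \<gamma>] = zero_map" using assms(7) by blast
  then show "plus_at F u \<alpha> \<beta> = plus_at F v \<alpha> \<beta>"
    using plus_at_eq_iff_sum_at_neg_zero[OF FG assms(5,6) a b g] by (simp add: \<gamma>_def)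
qed

end
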